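(* Let $\Theta\subseteq\mathbb{R}$ be the parameter space, let $\mathbf U$ be a random variable with values in a space $\mathbb M$ whose distribution does not depend on $\theta$, and let $S$ be a real-valued statistic generated by the data generating equation $S=G_S(\mathbf U,\theta)$, where $G_S:\mathbb M\times\Theta\to\mathbb{R}$ is deterministic. Write $F_S(s,\theta)=P_\theta(S\le s)$ for the distribution function of $S$, $Q_s(\mathbf u)=\{\theta\in\Theta: s=G_S(\mathbf u,\theta)\}$ for the inverse image, and let $\mathbf U^\star$ be an independent copy of $\mathbf U$. Assume 1) for every $\mathbf u$, the function $\theta\mapsto G_S(\mathbf u,\theta)$ is non-decreasing; and 2) for every $\mathbf u$ and every $s$, $Q_s(\mathbf u)\neq\emptyset$. Then each $Q_s(\mathbf u)$ is an interval with endpoints $Q_s^-(\mathbf u)\le Q_s^+(\mathbf u)$, and for any $s_0$ and $\theta_0$, $$P\big(Q^+_{s_0}(\mathbf U^\star)\le\theta_0\big)=1-\lim_{\epsilon\downarrow0}F_S(s_0,\theta_0+\epsilon),\qquad P\big(Q^-_{s_0}(\mathbf U^\star)\le\theta_0\big)=1-\lim_{\epsilon\downarrow0}F_S(s_0-\epsilon,\theta_0).$$ If additionally 3) for all $\theta_0$ and $s_0$, $P_{\theta_0}(S=s_0)=F_S(s_0,\theta_0)-\lim_{\epsilon\downarrow0}F_S(s_0-\epsilon,\theta_0)=0$, then $F_S(s,\theta)$ is continuous as a function of $\theta$, $Q^+_{s_0}(\mathbf U^\star)=Q^-_{s_0}(\mathbf U^\star)$ with probability $1$, and $$P\big(Q_{s_0}(\mathbf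 U^\star)\le\theta_0\big)=1-F_S(s_0,\theta_0).$$
   Context: In the generalized fiducial framework, the generalized fiducial distribution (GFD) of $\theta$ given an observed value $s$ is the conditional distribution of $Q_s(\mathbf U^\star)$ given $Q_s(\mathbf U^\star)\neq\emptyset$; under assumption 2) this is simply the distribution of $Q_s(\mathbf U^\star)$. Under assumption 3), $Q_{s_0}(\mathbf U^\star)$ denotes the common value $Q^+_{s_0}(\mathbf U^\star)=Q^-_{s_0}(\mathbf U^\star)$. *)

theory Defs
  imports "HOL-Probability.Probability"
begin

text \<open>Distribution function of the statistic S = G(U, theta), where U has law M
  (a probability measure on the space of u, not depending on theta):
  FS s theta = P_theta(S <= s).\<close>
definition FS :: "'u measure \<Rightarrow> ('u \<Rightarrow> real \<Rightarrow> real) \<Rightarrow> real \<Rightarrow> real \<Rightarrow> real" where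
  "FS M G s \<theta> = measure M {u \<in> space M. G u \<theta> \<le> s}"

definition Qset :: "real set \<Rightarrow> ('u \<Rightarrow> real \<Rightarrow> real) \<Rightarrow> real \<Rightarrow> 'u \<Rightarrow> real set" where
  "Qset \<Theta> G s u = {\<theta> \<in> \<Theta>. s = G u \<theta>}"

definition Qplus :: "real set \<Rightarrow> ('u \<Rightarrow> real \<Rightarrow> real) \<Rightarrow> real \<Rightarrow> 'u \<Rightarrow> real" where
  "Qplus \<Theta> G s u = Sup (Qset \<Theta> G s u)"

definition Qminus :: "real set \<Rightarrow> ('u \<Rightarrow> real \<Rightarrow> real) \<Rightarrow> real \<Rightarrow> 'u \<Rightarrow> real" where
  "Qminus \<Theta> G s u = Inf (Qset \<Theta> G s u)"

end

theory Submission
  imports Defs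
begin

text \<open>Every \<open>G u\<close> is a monotone map of the interval \<open>\<Theta>\<close> onto \<open>\<real>\<close>, hence continuous, so each
  level set \<open>Q\<^sub>s(u)\<close> is the compact interval \<open>[Q\<^sup>-\<^sub>s(u), Q\<^sup>+\<^sub>s(u)]\<close>. Consequently
  \<open>Q\<^sup>+\<^sub>s(u) < \<theta> \<longleftrightarrow> s < G u \<theta>\<close> and \<open>Q\<^sup>-\<^sub>s(u) \<le> \<theta> \<longleftrightarrow> s \<le> G u \<theta>\<close>, so \<open>F\<^sub>S(s, \<theta>)\<close> is one minus
  the probability of \<open>Q\<^sup>+\<^sub>s < \<theta>\<close>, and both limits are one-sided limits of distribution
  functions, computed by continuity of measure along monotone sequences. Without atoms,
  \<open>Q\<^sup>- < Q\<^sup>+\<close> forces \<open>G u r = s\<close> for some rational \<open>r\<close>, so it happens only on a countable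
  union of null events; and \<open>F\<^sub>S(s, \<cdot>)\<close> is continuous by dominated convergence, because \<open>G u\<close> is.\<close>

lemma tendsto_at_right_iff_shift_0:
  fixes f :: "real \<Rightarrow> 'a::topological_space"
  shows "(f \<longlongrightarrow> l) (at_right a) \<longleftrightarrow> ((\<lambda>\<epsilon>. f (a + \<epsilon>)) \<longlongrightarrow> l) (at_right 0)"
  unfolding filterlim_at_right_to_0[of f _ a] by (simp add: add.commute)

lemma tendsto_at_left_iff_shift_0:
  fixes f :: "real \<Rightarrow> 'a::topological_space"
  shows "(f \<longlongrightarrow> l) (at_left a) \<longleftrightarrow> ((\<lambda>\<epsilon>. f (a - \<epsilon>)) \<longlongrightarrow> l) (at_right 0)"
  unfolding at_left_minus[of a] filterlim_filtermap filterlim_at_right_to_0[of _ _ "-a"]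
  by simp

context finite_measure
begin

lemma tendsto_measure_less_at_right:
  fixes X :: "'a \<Rightarrow> real"
  assumes X: "X \<in> borel_measurable M"
  shows "((\<lambda>x. measure M {u \<in> space M. X u < x}) \<longlongrightarrow> measure M {u \<in> space M. X u \<le> a})
    (at_right a)"
proof (rule tendsto_at_right_sequentially[of a "a + 1"])
  fix S :: "nat \<Rightarrow> real"
  assume S: "\<And>n. a < S n" "decseq S" "S \<longlonglongrightarrow> a"
  have "(\<Inter>n. {u \<in> space M. X u < S n}) = {u \<in> space M. X u \<le> a}"
    using S by (force intro: LIMSEQ_le_const[OF S(3)] less_imp_le le_less_trans)
  moreover have "(\<lambda>n. measure M {u \<in> space M. X u < S n}) \<longlonglongrightarrow> measure M (\<Inter>n. {u \<in> space M. X u < S n})"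
    using X S(2) by (intro finite_Lim_measure_decseq) (auto simp: decseq_def dest: order.strict_trans2)
  ultimately show "(\<lambda>n. measure M {u \<in> space M. X u < S n}) \<longlonglongrightarrow> measure M {u \<in> space M. X u \<le> a}"
    by simp
qed simp

lemma tendsto_measure_le_at_left:
  fixes X :: "'a \<Rightarrow> real"
  assumes X: "X \<in> borel_measurable M"
  shows "((\<lambda>x. measure M {u \<in> space M. X u \<le> x}) \<longlongrightarrow> measure M {u \<in> space M. X u < a})
    (at_left a)"
proof (rule tendsto_at_left_sequentially[of "a - 1" a])
  fix S :: "nat \<Rightarrow> real"
  assume S: "\<And>n. S n < a" "incseq S" "S \<longlonglongrightarrow> a"
  have "(\<Union>n. {u \<in> space M. X u \<le> S n}) = {u \<in> space M. X u < a}"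
    using S by (auto dest!: order_tendstoD(1)[OF S(3)] eventually_happens'[OF sequentially_bot]
      intro: le_less_trans less_imp_le)
  moreover have "(\<lambda>n. measure M {u \<in> space M. X u \<le> S n}) \<longlonglongrightarrow> measure M (\<Union>n. {u \<in> space M. X u \<le> S n})"
    using X S(2) by (intro finite_Lim_measure_incseq) (auto simp: incseq_def dest: order.trans)
  ultimately show "(\<lambda>n. measure M {u \<in> space M. X u \<le> S n}) \<longlonglongrightarrow> measure M {u \<in> space M. X u < a}"
    by simp
qed simp

lemma tendsto_measure_le_of_tendsto:
  fixes X :: "nat \<Rightarrow> 'a \<Rightarrow> real" and Y :: "'a \<Rightarrow> real"
  assumes X: "\<And>n. X n \<in> borel_measurable M" and Y: "Y \<in> borel_measurable M"
    and lim: "AE u in M. (\<lambda>n. X n u) \<longlonglongrightarrow> Y u"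
    and no_atom: "measure M {u \<in> space M. Y u = c} = 0"
  shows "(\<lambda>n. measure M {u \<in> space M. X n u \<le> c}) \<longlonglongrightarrow> measure M {u \<in> space M. Y u \<le> c}"
proof -
  have "AE u in M. Y u \<noteq> c"
    using no_atom Y by (subst AE_iff_measurable[of "{u \<in> space M. Y u = c}"])
      (auto simp: emeasure_eq_measure)
  with lim have lim_indicator: "AE u in M. (\<lambda>n. indicator {u \<in> space M. X n u \<le> c} u :: real)
      \<longlonglongrightarrow> indicator {u \<in> space M. Y u \<le> c} u"
  proof eventually_elim
    case (elim u)
    show ?case
    proof (cases "Y u < c")
      case True
      then have "eventually (\<lambda>n. X n u < c) sequentially"
        using elim by (intro order_tendstoD(2)) auto
      then show ?thesis
        using True elim by (intro tendsto_eventually) (auto elim!: eventually_mono simp: indicator_def)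
    next
      case False
      then have "eventually (\<lambda>n. c < X n u) sequentially"
        using elim by (intro order_tendstoD(1)) auto
      then show ?thesis
        using False elim by (intro tendsto_eventually) (auto elim!: eventually_mono simp: indicator_def)
    qed
  qed
  have "(\<lambda>n. integral\<^sup>L M (indicator {u \<in> space M. X n u \<le> c} :: 'a \<Rightarrow> real))
      \<longlonglongrightarrow> integral\<^sup>L M (indicator {u \<in> space M. Y u \<le> c})"
    using X Y lim_indicator by (intro integral_dominated_convergence[where w="\<lambda>_. 1"]) auto
  then show ?thesis
    by (simp add: inf.absorb1)
qed

end

lemma is_interval_not_mem_cases:
  fixes T :: "real set"
  assumes "is_interval T" and "t \<notin> T"
  shows "(\<forall>x\<in>T. x < t) \<or> (\<forall>x\<in>T. t < x)"
proof (rule ccontr)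
  assume "\<not> ?thesis"
  then obtain x y where "x \<in> T" "t \<le> x" "y \<in> T" "y \<le> t"
    by (auto simp: not_less)
  then show False
    using assms unfolding is_interval_1 by blast
qed

locale monotone_data_generating_equation = prob_space M for M :: "'u measure" +
  fixes G :: "'u \<Rightarrow> real \<Rightarrow> real" and \<Theta> :: "real set"
  assumes Theta_interval: "is_interval \<Theta>"
    and G_measurable: "\<And>\<theta>. \<theta> \<in> \<Theta> \<Longrightarrow> (\<lambda>u. G u \<theta>) \<in> borel_measurable M"
    and G_mono_on: "\<And>u. u \<in> space M \<Longrightarrow> mono_on \<Theta> (G u)"
    and Qset_nonempty: "\<And>u s. u \<in> space M \<Longrightarrow> Qset \<Theta> G s u \<noteq> {}"
begin

lemma G_mono: "u \<in> space M \<Longrightarrow> a \<in> \<Theta> \<Longrightarrow> b \<in> \<Theta> \<Longrightarrow> a \<le> b \<Longrightarrow> G u a \<le> G u b"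
  using G_mono_on by (meson mono_onD)

lemma G_surj: "u \<in> space M \<Longrightarrow> \<exists>\<theta>\<in>\<Theta>. G u \<theta> = s"
  using Qset_nonempty[of u s] unfolding Qset_def by auto

lemma continuous_on_G:
  assumes u: "u \<in> space M"
  shows "continuous_on \<Theta> (G u)"
proof (rule continuous_onI_mono)
  have "s \<in> G u ` \<Theta>" for s
    using G_surj[OF u, of s] by force
  then show "open (G u ` \<Theta>)"
    by (metis UNIV_eq_I open_UNIV)
qed (rule G_mono[OF u])

lemma Theta_no_maximum:
  assumes "\<theta>0 \<in> \<Theta>"
  obtains \<theta> where "\<theta> \<in> \<Theta>" "\<theta>0 < \<theta>"
proof -
  obtain u where u: "u \<in> space M"
    using not_empty by blast
  then obtain \<theta> where \<theta>: "\<theta> \<in> \<Theta>" "G u \<theta> = G u \<theta>0 + 1"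
    using G_surj by blast
  then have "\<not> \<theta> \<le> \<theta>0"
    using G_mono[OF u \<theta>(1) assms] by auto
  with \<theta>(1) show thesis
    by (intro that) auto
qed

lemma Qset_eq_level_set_Icc:
  assumes u: "u \<in> space M"
  obtains a b where "{a..b} \<subseteq> \<Theta>" "Qset \<Theta> G s u = {\<theta> \<in> {a..b}. G u \<theta> = s}"
proof -
  obtain a where a: "a \<in> \<Theta>" "G u a = s - 1"
    using G_surj[OF u, of "s - 1"] by blast
  obtain b where b: "b \<in> \<Theta>" "G u b = s + 1"
    using G_surj[OF u, of "s + 1"] by blast
  have Icc: "{a..b} \<subseteq> \<Theta>"
    using Theta_interval a(1) b(1) unfolding is_interval_1 by (meson atLeastAtMost_iff subsetI)
  have "a \<le> \<theta> \<and> \<theta> \<le> b" if \<theta>: "\<theta> \<in> \<Theta>" "G u \<theta> = s" for \<theta>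
    using G_mono[OF u \<theta>(1) a(1)] G_mono[OF u b(1) \<theta>(1)] \<theta>(2) a(2) b(2) by (smt (verit))
  then have "Qset \<Theta> G s u = {\<theta> \<in> {a..b}. G u \<theta> = s}"
    using Icc unfolding Qset_def by auto
  with Icc show thesis
    by (rule that)
qed

lemma compact_Qset: "u \<in> space M \<Longrightarrow> compact (Qset \<Theta> G s u)"
proof -
  assume u: "u \<in> space M"
  then obtain a b where ab: "{a..b} \<subseteq> \<Theta>" "Qset \<Theta> G s u = {\<theta> \<in> {a..b}. G u \<theta> = s}"
    by (rule Qset_eq_level_set_Icc)
  have "closed {\<theta> \<in> {a..b}. G u \<theta> = s}"
    using continuous_on_subset[OF continuous_on_G[OF u] ab(1)]
    by (rule continuous_closed_preimage_constant) simp
  then show ?thesis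
    unfolding ab(2) compact_eq_bounded_closed by (auto intro: bounded_subset[of "{a..b}"])
qed

lemma Qplus_mem: "u \<in> space M \<Longrightarrow> Qplus \<Theta> G s u \<in> Qset \<Theta> G s u"
  unfolding Qplus_def using Qset_nonempty compact_Qset
  by (intro closed_contains_Sup) (auto simp: compact_eq_bounded_closed bounded_imp_bdd_above)

lemma Qminus_mem: "u \<in> space M \<Longrightarrow> Qminus \<Theta> G s u \<in> Qset \<Theta> G s u"
  unfolding Qminus_def using Qset_nonempty compact_Qset
  by (intro closed_contains_Inf) (auto simp: compact_eq_bounded_closed bounded_imp_bdd_below)

lemma Qset_between:
  assumes "u \<in> space M" "\<theta> \<in> Qset \<Theta> G s u"
  shows "Qminus \<Theta> G s u \<le> \<theta>" "\<theta> \<le> Qplus \<Theta> G s u"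
  using assms compact_Qset[OF assms(1)] unfolding Qminus_def Qplus_def
  by (simp_all add: cInf_lower cSup_upper bounded_imp_bdd_below bounded_imp_bdd_above
    compact_imp_bounded)

lemma is_interval_Qset:
  assumes u: "u \<in> space M"
  shows "is_interval (Qset \<Theta> G s u)"
  unfolding is_interval_1
proof (intro ballI allI impI)
  fix a b x
  assume a: "a \<in> Qset \<Theta> G s u" and b: "b \<in> Qset \<Theta> G s u" and x: "a \<le> x \<and> x \<le> b"
  then have "x \<in> \<Theta>"
    using Theta_interval unfolding is_interval_1 Qset_def by blast
  with a b x show "x \<in> Qset \<Theta> G s u"
    using G_mono[OF u, of a x] G_mono[OF u, of x b] unfolding Qset_def by fastforce
qed

lemma Qminus_le_iff:
  assumes "u \<in> space M" "\<theta> \<in> \<Theta>"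
  shows "Qminus \<Theta> G s u \<le> \<theta> \<longleftrightarrow> s \<le> G u \<theta>"
proof
  have mem: "Qminus \<Theta> G s u \<in> \<Theta>" "G u (Qminus \<Theta> G s u) = s"
    using Qminus_mem[OF assms(1)] by (auto simp: Qset_def)
  show "s \<le> G u \<theta>" if "Qminus \<Theta> G s u \<le> \<theta>"
    using G_mono[OF assms(1) mem(1) assms(2) that] mem(2) by simp
  show "Qminus \<Theta> G s u \<le> \<theta>" if "s \<le> G u \<theta>"
  proof (rule ccontr)
    assume "\<not> Qminus \<Theta> G s u \<le> \<theta>"
    then have "G u \<theta> = s"
      using G_mono[OF assms(1) assms(2) mem(1)] mem(2) that by simp
    then show False
      using Qset_between(1)[OF assms(1), of \<theta>] assms \<open>\<not> Qminus \<Theta> G s u \<le> \<theta>\<close>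
      by (simp add: Qset_def)
  qed
qed

lemma Qplus_less_iff:
  assumes "u \<in> space M" "\<theta> \<in> \<Theta>"
  shows "Qplus \<Theta> G s u < \<theta> \<longleftrightarrow> s < G u \<theta>"
proof
  have mem: "Qplus \<Theta> G s u \<in> \<Theta>" "G u (Qplus \<Theta> G s u) = s"
    using Qplus_mem[OF assms(1)] by (auto simp: Qset_def)
  show "s < G u \<theta>" if "Qplus \<Theta> G s u < \<theta>"
  proof -
    have "G u \<theta> \<noteq> s"
      using Qset_between(2)[OF assms(1), of \<theta>] assms that by (auto simp: Qset_def)
    then show ?thesis
      using G_mono[OF assms(1) mem(1) assms(2)] mem(2) that by fastforce
  qed
  show "Qplus \<Theta> G s u < \<theta>" if "s < G u \<theta>"
    using G_mono[OF assms(1) assms(2) mem(1)] mem(2) that by fastforce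
qed

lemma Qplus_in_Theta: "u \<in> space M \<Longrightarrow> Qplus \<Theta> G s u \<in> \<Theta>"
  using Qplus_mem by (simp add: Qset_def)

lemma Qplus_measurable: "Qplus \<Theta> G s \<in> borel_measurable M"
proof (rule borel_measurableI_less)
  fix t
  show "{u \<in> space M. Qplus \<Theta> G s u < t} \<in> sets M"
  proof (cases "t \<in> \<Theta>")
    case True
    then have "{u \<in> space M. Qplus \<Theta> G s u < t} = {u \<in> space M. s < G u t}"
      using Qplus_less_iff by auto
    then show ?thesis
      using G_measurable[OF True] by simp
  next
    case False
    then consider "\<forall>\<theta>\<in>\<Theta>. \<theta> < t" | "\<forall>\<theta>\<in>\<Theta>. t < \<theta>"
      using is_interval_not_mem_cases[OF Theta_interval] by blast
    then show ?thesis
    proof cases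
      case 1
      then have "{u \<in> space M. Qplus \<Theta> G s u < t} = space M"
        using Qplus_in_Theta by auto
      then show ?thesis
        by simp
    next
      case 2
      then have "{u \<in> space M. Qplus \<Theta> G s u < t} = {}"
        using Qplus_in_Theta less_asym by blast
      then show ?thesis
        by (metis sets.empty_sets)
    qed
  qed
qed

lemma FS_eq_prob_Qplus_less:
  assumes "\<theta> \<in> \<Theta>"
  shows "FS M G s \<theta> = 1 - prob {u \<in> space M. Qplus \<Theta> G s u < \<theta>}"
proof -
  have "{u \<in> space M. G u \<theta> \<le> s} = space M - {u \<in> space M. Qplus \<Theta> G s u < \<theta>}"
    using Qplus_less_iff[OF _ assms] by (auto simp: not_less)
  then show ?thesis
    unfolding FS_def using prob_compl Qplus_measurable by simp
qed

lemma Qminus_le_eq: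
  assumes "\<theta> \<in> \<Theta>"
  shows "{u \<in> space M. Qminus \<Theta> G s u \<le> \<theta>} = {u \<in> space M. s \<le> G u \<theta>}"
  using Qminus_le_iff[OF _ assms] by auto

lemma prob_Qminus_le:
  assumes "\<theta> \<in> \<Theta>"
  shows "prob {u \<in> space M. Qminus \<Theta> G s u \<le> \<theta>} = 1 - prob {u \<in> space M. G u \<theta> < s}"
proof -
  have "{u \<in> space M. s \<le> G u \<theta>} = space M - {u \<in> space M. G u \<theta> < s}"
    by (auto simp: not_less)
  then show ?thesis
    unfolding Qminus_le_eq[OF assms] using prob_compl G_measurable[OF assms] by simp
qed

lemma tendsto_FS_at_right:
  assumes \<theta>0: "\<theta>0 \<in> \<Theta>"
  shows "((\<lambda>\<theta>. FS M G s \<theta>) \<longlongrightarrow> 1 - prob {u \<in> space M. Qplus \<Theta> G s u \<le> \<theta>0}) (at_right \<theta>0)"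
proof -
  obtain \<theta>1 where \<theta>1: "\<theta>1 \<in> \<Theta>" "\<theta>0 < \<theta>1"
    using Theta_no_maximum[OF \<theta>0] .
  have "eventually (\<lambda>\<theta>. \<theta> \<in> \<Theta>) (at_right \<theta>0)"
    unfolding eventually_at_right[OF \<theta>1(2)]
    using Theta_interval \<theta>0 \<theta>1 unfolding is_interval_1 by (meson less_imp_le)
  then have "eventually (\<lambda>\<theta>. 1 - prob {u \<in> space M. Qplus \<Theta> G s u < \<theta>} = FS M G s \<theta>) (at_right \<theta>0)"
    by eventually_elim (simp add: FS_eq_prob_Qplus_less)
  moreover have "((\<lambda>\<theta>. 1 - prob {u \<in> space M. Qplus \<Theta> G s u < \<theta>})
      \<longlongrightarrow> 1 - prob {u \<in> space M. Qplus \<Theta> G s u \<le> \<theta>0}) (at_right \<theta>0)"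
    by (intro tendsto_diff tendsto_const tendsto_measure_less_at_right Qplus_measurable)
  ultimately show ?thesis
    by (rule Lim_transform_eventually[rotated])
qed

lemma tendsto_FS_at_left:
  assumes \<theta>0: "\<theta>0 \<in> \<Theta>"
  shows "((\<lambda>s. FS M G s \<theta>0) \<longlongrightarrow> 1 - prob {u \<in> space M. Qminus \<Theta> G s0 u \<le> \<theta>0}) (at_left s0)"
  unfolding FS_def prob_Qminus_le[OF \<theta>0]
  using tendsto_measure_le_at_left[OF G_measurable[OF \<theta>0]] by simp

context
  fixes s :: real
  assumes no_atom: "\<And>\<theta>. \<theta> \<in> \<Theta> \<Longrightarrow> prob {u \<in> space M. G u \<theta> = s} = 0"
begin

lemma AE_Qplus_eq_Qminus: "AE u in M. Qplus \<Theta> G s u = Qminus \<Theta> G s u"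
proof (rule AE_I')
  show "(\<Union>r \<in> \<Theta> \<inter> \<rat>. {u \<in> space M. G u r = s}) \<in> null_sets M"
  proof (rule null_sets_UN')
    show "countable (\<Theta> \<inter> \<rat>)"
      using countable_rat by (rule countable_subset[rotated]) auto
    show "{u \<in> space M. G u r = s} \<in> null_sets M" if "r \<in> \<Theta> \<inter> \<rat>" for r
      using that no_atom G_measurable by (auto simp: emeasure_eq_measure)
  qed
  show "{u \<in> space M. Qplus \<Theta> G s u \<noteq> Qminus \<Theta> G s u} \<subseteq> (\<Union>r \<in> \<Theta> \<inter> \<rat>. {u \<in> space M. G u r = s})"
  proof safe
    fix u
    assume u: "u \<in> space M" and ne: "Qplus \<Theta> G s u \<noteq> Qminus \<Theta> G s u"
    then have "Qminus \<Theta> G s u < Qplus \<Theta> G s u"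
      using Qset_between(2)[OF u Qminus_mem[OF u, of s]] by simp
    then obtain r where r: "r \<in> \<rat>" "Qminus \<Theta> G s u < r" "r < Qplus \<Theta> G s u"
      using Rats_dense_in_real by blast
    then have "r \<in> Qset \<Theta> G s u"
      using is_interval_Qset[OF u] Qminus_mem[OF u] Qplus_mem[OF u]
      unfolding is_interval_1 by (meson less_imp_le)
    with r u show "u \<in> (\<Union>r \<in> \<Theta> \<inter> \<rat>. {u \<in> space M. G u r = s})"
      by (auto simp: Qset_def)
  qed
qed

lemma FS_eq_prob_less:
  assumes \<theta>: "\<theta> \<in> \<Theta>"
  shows "FS M G s \<theta> = prob {u \<in> space M. G u \<theta> < s}"
proof -
  have "{u \<in> space M. G u \<theta> \<le> s} = {u \<in> space M. G u \<theta> < s} \<union> {u \<in> space M. G u \<theta> = s}"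
    by auto
  moreover have "{u \<in> space M. G u \<theta> < s} \<in> events" "{u \<in> space M. G u \<theta> = s} \<in> events"
    using G_measurable[OF \<theta>] by simp_all
  ultimately show ?thesis
    unfolding FS_def using finite_measure_Union[of "{u \<in> space M. G u \<theta> < s}"] no_atom[OF \<theta>]
    by fastforce
qed

lemma prob_Qplus_le:
  assumes \<theta>: "\<theta> \<in> \<Theta>"
  shows "prob {u \<in> space M. Qplus \<Theta> G s u \<le> \<theta>} = 1 - FS M G s \<theta>"
proof -
  have "AE u in M. Qplus \<Theta> G s u \<le> \<theta> \<longleftrightarrow> s \<le> G u \<theta>"
    using AE_Qplus_eq_Qminus AE_space by eventually_elim (simp add: Qminus_le_iff[OF _ \<theta>])
  then have "prob {u \<in> space M. Qplus \<Theta> G s u \<le> \<theta>} = prob {u \<in> space M. s \<le> G u \<theta>}"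
    using Qplus_measurable G_measurable[OF \<theta>] by (intro measure_eq_AE) auto
  then show ?thesis
    using prob_Qminus_le[OF \<theta>] FS_eq_prob_less[OF \<theta>] by (simp add: Qminus_le_eq[OF \<theta>])
qed

lemma continuous_on_FS: "continuous_on \<Theta> (\<lambda>\<theta>. FS M G s \<theta>)"
proof (rule continuous_on_sequentiallyI)
  fix x :: "nat \<Rightarrow> real" and \<theta>
  assume x: "\<forall>n. x n \<in> \<Theta>" and \<theta>: "\<theta> \<in> \<Theta>" and lim: "x \<longlonglongrightarrow> \<theta>"
  have "AE u in M. (\<lambda>n. G u (x n)) \<longlonglongrightarrow> G u \<theta>"
    using continuous_on_tendsto_compose[OF continuous_on_G lim \<theta>] x by simp
  then show "(\<lambda>n. FS M G s (x n)) \<longlonglongrightarrow> FS M G s \<theta>"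
    unfolding FS_def
    using x \<theta> G_measurable no_atom[OF \<theta>] by (intro tendsto_measure_le_of_tendsto) auto
qed

end

end

theorem theorem1:
  fixes M :: "'u measure" and G :: "'u \<Rightarrow> real \<Rightarrow> real" and \<Theta> :: "real set"
  assumes prob: "prob_space M"
    and Theta_interval: "is_interval \<Theta>"
    and S_rv: "\<And>\<theta>. \<theta> \<in> \<Theta> \<Longrightarrow> (\<lambda>u. G u \<theta>) \<in> borel_measurable M"
    and A1: "\<And>u. u \<in> space M \<Longrightarrow> mono_on \<Theta> (G u)"
    and A2: "\<And>u s. u \<in> space M \<Longrightarrow> Qset \<Theta> G s u \<noteq> {}"
  shows
    "(\<forall>u\<in>space M. \<forall>s. is_interval (Qset \<Theta> G s u) \<and> bounded (Qset \<Theta> G s u)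
        \<and> Qminus \<Theta> G s u \<le> Qplus \<Theta> G s u)
     \<and> (\<forall>s0. \<forall>\<theta>0\<in>\<Theta>.
          ((\<lambda>\<epsilon>. FS M G s0 (\<theta>0 + \<epsilon>)) \<longlongrightarrow>
              1 - measure M {u \<in> space M. Qplus \<Theta> G s0 u \<le> \<theta>0}) (at_right 0)
        \<and> ((\<lambda>\<epsilon>. FS M G (s0 - \<epsilon>) \<theta>0) \<longlongrightarrow>
              1 - measure M {u \<in> space M. Qminus \<Theta> G s0 u \<le> \<theta>0}) (at_right 0))
     \<and> ((\<forall>\<theta>0\<in>\<Theta>. \<forall>s0. measure M {u \<in> space M. G u \<theta>0 = s0} = 0) \<longrightarrow>
          (\<forall>s. continuous_on \<Theta> (\<lambda>\<theta>. FS M G s \<theta>))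
          \<and> (\<forall>s0. AE u in M. Qplus \<Theta> G s0 u = Qminus \<Theta> G s0 u)
          \<and> (\<forall>s0. \<forall>\<theta>0\<in>\<Theta>.
               measure M {u \<in> space M. Qplus \<Theta> G s0 u \<le> \<theta>0} = 1 - FS M G s0 \<theta>0))"
proof -
  interpret monotone_data_generating_equation M G \<Theta>
    unfolding monotone_data_generating_equation_def monotone_data_generating_equation_axioms_def using assms by blast
  have level_sets: "is_interval (Qset \<Theta> G s u) \<and> bounded (Qset \<Theta> G s u)
      \<and> Qminus \<Theta> G s u \<le> Qplus \<Theta> G s u" if "u \<in> space M" for u s
    using is_interval_Qset[OF that] compact_imp_bounded[OF compact_Qset[OF that]]
      Qset_between(2)[OF that Qminus_mem[OF that]] by blast
  have limits: "((\<lambda>\<epsilon>. FS M G s0 (\<theta>0 + \<epsilon>)) \<longlongrightarrow> 1 - prob {u \<in> space M. Qplus \<Theta> G s0 u \<le> \<theta>0}) (at_right 0)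
      \<and> ((\<lambda>\<epsilon>. FS M G (s0 - \<epsilon>) \<theta>0) \<longlongrightarrow> 1 - prob {u \<in> space M. Qminus \<Theta> G s0 u \<le> \<theta>0}) (at_right 0)"
    if "\<theta>0 \<in> \<Theta>" for s0 \<theta>0
    using tendsto_FS_at_right[OF that, THEN tendsto_at_right_iff_shift_0[THEN iffD1]]
      tendsto_FS_at_left[OF that, THEN tendsto_at_left_iff_shift_0[THEN iffD1]] by blast
  have no_atoms: "(\<forall>s. continuous_on \<Theta> (\<lambda>\<theta>. FS M G s \<theta>))
      \<and> (\<forall>s0. AE u in M. Qplus \<Theta> G s0 u = Qminus \<Theta> G s0 u)
      \<and> (\<forall>s0. \<forall>\<theta>0\<in>\<Theta>. prob {u \<in> space M. Qplus \<Theta> G s0 u \<le> \<theta>0} = 1 - FS M G s0 \<theta>0)"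
    if "\<forall>\<theta>0\<in>\<Theta>. \<forall>s0. prob {u \<in> space M. G u \<theta>0 = s0} = 0"
    using that by (intro conjI allI ballI continuous_on_FS AE_Qplus_eq_Qminus prob_Qplus_le) auto
  show ?thesis
    using level_sets limits no_atoms by (intro conjI ballI allI impI) auto
qed

end
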